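(* Let $\mathcal{D}=(V,\Phi)$ be a finite directed graph (arcs $\Phi\subseteq V\times V$) with adjacency matrix $M\in\{0,1\}^{V\times V}$ ($M_{vw}=1$ iff $(v,w)\in\Phi$). Let $\boldsymbol{\alpha}(t),\boldsymbol{\beta}(t)\in[0,+\infty)^V$ ($t\ge0$) be vector sequences such that $\boldsymbol{\alpha}(t)$ is non-decreasing in every component and $\boldsymbol{\beta}(t)$ is convergent, and let $\mathbf{r},\mathbf{s}\in(0,+\infty)^V$ with $r_v=s_v^{-1}$ for all $v\in V$. Set $W_{vw}=r_vM_{vw}s_w$. Define $\boldsymbol{\omega}(t),\boldsymbol{\eta}(t)\in\mathbb{R}^V$ by $\boldsymbol{\omega}(0)=\boldsymbol{\eta}(0)=\mathbf{1}$ and, for all $v\in V$, $t\ge0$, $$\omega_v(t+1)=\frac{1}{1+\alpha_v(t)+\sum_{w}W_{vw}(1-\omega_w(t))},\qquad \eta_v(t+1)=1+\beta_v(t)+\sum_w M_{vw}\,\omega_w(t)\,\eta_w(t).$$ If $\mathcal{D}$ is acyclic, then $\boldsymbol{\eta}(t)$ is convergent and $\boldsymbol{\omega}(t)$ is non-increasing in every component and convergent. Moreover, for each $v\in V$, $\lim_{t\to\infty}\omega_v(t)<1$ if and only if there exists $w$ reachable from $v$ such that the sequence $\alpha_w(t)$ is not identically zero.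
   Context: A path from $v$ to $w$ of length $l\ge0$ is a list $(u_0,\dots,u_l)$ with $u_0=v$, $u_l=w$ and $(u_{i-1},u_i)\in\Phi$; $w$ is reachable from $v$ if such a path of some length $l\ge0$ exists (so $v$ is reachable from itself). A strongly connected component is a maximal induced subdigraph in which every node is reachable from every other; it is trivial if it is a single node without a self-loop. $\mathcal{D}$ is acyclic if all its strongly connected components are trivial. *)

theory Defs
  imports Complex_Main
begin

definition adj :: "('a \<times> 'a) set \<Rightarrow> 'a \<Rightarrow> 'a \<Rightarrow> real" where
  "adj Phi v w = (if (v, w) \<in> Phi then 1 else 0)"

definition wmat :: "('a \<times> 'a) set \<Rightarrow> ('a \<Rightarrow> real) \<Rightarrow> ('a \<Rightarrow> real) \<Rightarrow> 'a \<Rightarrow> 'a \<Rightarrow> real" where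
  "wmat Phi r s v w = r v * adj Phi v w * s w"

primrec omega_seq :: "'a set \<Rightarrow> ('a \<times> 'a) set \<Rightarrow> (nat \<Rightarrow> 'a \<Rightarrow> real) \<Rightarrow>
    ('a \<Rightarrow> real) \<Rightarrow> ('a \<Rightarrow> real) \<Rightarrow> nat \<Rightarrow> 'a \<Rightarrow> real" where
  "omega_seq V Phi \<alpha> r s 0 = (\<lambda>v. 1)"
| "omega_seq V Phi \<alpha> r s (Suc t) = (\<lambda>v. 1 / (1 + \<alpha> t v +
      (\<Sum>w\<in>V. wmat Phi r s v w * (1 - omega_seq V Phi \<alpha> r s t w))))"

primrec eta_seq :: "'a set \<Rightarrow> ('a \<times> 'a) set \<Rightarrow> (nat \<Rightarrow> 'a \<Rightarrow> real) \<Rightarrow> (nat \<Rightarrow> 'a \<Rightarrow> real) \<Rightarrow>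
    ('a \<Rightarrow> real) \<Rightarrow> ('a \<Rightarrow> real) \<Rightarrow> nat \<Rightarrow> 'a \<Rightarrow> real" where
  "eta_seq V Phi \<alpha> \<beta> r s 0 = (\<lambda>v. 1)"
| "eta_seq V Phi \<alpha> \<beta> r s (Suc t) = (\<lambda>v. 1 + \<beta> t v +
      (\<Sum>w\<in>V. adj Phi v w * omega_seq V Phi \<alpha> r s t w * eta_seq V Phi \<alpha> \<beta> r s t w))"

end

theory Submission
  imports Defs
begin

text \<open>
  Since \<open>\<alpha> \<ge> 0\<close> and \<open>W \<ge> 0\<close>, an induction on \<open>t\<close> keeps every \<open>\<omega>\<^sub>v(t)\<close> in \<open>(0, 1]\<close>, and a second
  induction shows that \<open>\<omega>\<^sub>v(t + 1) \<le> \<omega>\<^sub>v(t)\<close>: if \<open>\<omega>(t)\<close> decreases and \<open>\<alpha>(t)\<close> increases, the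
  denominator grows. Hence \<open>\<omega>\<^sub>v\<close> converges, and its limit is below 1 iff some \<open>\<omega>\<^sub>v(t) < 1\<close>.
  A value below 1 propagates backwards along arcs (it makes the correction term of the
  predecessor positive one step later), starting from any node with \<open>\<alpha>\<^sub>w(t) > 0\<close>;
  conversely, if \<open>\<alpha>\<close> vanishes on everything reachable from \<open>v\<close>, then \<open>\<omega> = 1\<close> there throughout.
  Finally, acyclicity makes the converse arc relation well founded, and \<open>\<eta>\<^sub>v(t + 1)\<close> is a finite
  sum of convergent sequences once \<open>\<eta>\<^sub>w\<close> converges for all successors \<open>w\<close> of \<open>v\<close>.
\<close>

lemma wmat_nonneg:
  assumes "0 \<le> r v" "0 \<le> s w"
  shows "0 \<le> wmat Phi r s v w"
  using assms by (simp add: wmat_def adj_def)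

lemma wmat_pos:
  assumes "0 < r v" "0 < s w" "(v, w) \<in> Phi"
  shows "0 < wmat Phi r s v w"
  using assms by (simp add: wmat_def adj_def)

lemma rtrancl_closed_in:
  assumes "Phi \<subseteq> V \<times> V" "(v, w) \<in> Phi\<^sup>*" "v \<in> V"
  shows "w \<in> V"
  using assms(2,3,1) by (induction rule: rtrancl_induct) auto

lemma decseq_lim_less_first_iff:
  fixes f :: "nat \<Rightarrow> real"
  assumes "decseq f" "bdd_below (range f)"
  shows "lim f < f 0 \<longleftrightarrow> (\<exists>t. f t < f 0)"
proof
  assume "lim f < f 0"
  show "\<exists>t. f t < f 0"
  proof (rule ccontr)
    assume "\<nexists>t. f t < f 0"
    with \<open>decseq f\<close> have "f = (\<lambda>t. f 0)"
      by (metis antisym decseq_def le0 not_less)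
    with \<open>lim f < f 0\<close> show False
      by (metis less_irrefl lim_const)
  qed
next
  assume "\<exists>t. f t < f 0"
  then obtain t where "f t < f 0" ..
  obtain B where "\<forall>t. B \<le> f t"
    using \<open>bdd_below (range f)\<close> by (auto simp: bdd_below_def)
  then have "f \<longlonglongrightarrow> lim f"
    using decseq_convergent[OF \<open>decseq f\<close>] by (metis limI)
  then have "lim f \<le> f t"
    using \<open>decseq f\<close> by (rule decseq_ge[rotated])
  with \<open>f t < f 0\<close> show "lim f < f 0" by linarith
qed

lemma omega_seq_eq_one_if_alpha_vanishes:
  assumes "\<forall>w. (v, w) \<in> Phi\<^sup>* \<longrightarrow> (\<forall>t. \<alpha> t w = 0)"
  shows "\<forall>x. (v, x) \<in> Phi\<^sup>* \<longrightarrow> omega_seq V Phi \<alpha> r s t x = 1"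
proof (induction t)
  case 0
  then show ?case by simp
next
  case (Suc t)
  show ?case
  proof (intro allI impI)
    fix x assume x: "(v, x) \<in> Phi\<^sup>*"
    have summand_zero: "wmat Phi r s x w * (1 - omega_seq V Phi \<alpha> r s t w) = 0" for w
      using Suc.IH rtrancl_into_rtrancl[OF x] by (auto simp: wmat_def adj_def)
    then have "(\<Sum>w\<in>V. wmat Phi r s x w * (1 - omega_seq V Phi \<alpha> r s t w)) = 0"
      by (simp only: summand_zero sum.neutral_const)
    then show "omega_seq V Phi \<alpha> r s (Suc t) x = 1"
      using assms x by simp
  qed
qed

context
  fixes V :: "'a set" and Phi :: "('a \<times> 'a) set"
    and \<alpha> :: "nat \<Rightarrow> 'a \<Rightarrow> real" and r s :: "'a \<Rightarrow> real"
  assumes alpha_nonneg: "\<forall>t. \<forall>v\<in>V. 0 \<le> \<alpha> t v"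
    and rs_pos: "\<forall>v\<in>V. 0 < r v \<and> 0 < s v"
begin

lemma omega_seq_in_unit_interval:
  "\<forall>v\<in>V. 0 < omega_seq V Phi \<alpha> r s t v \<and> omega_seq V Phi \<alpha> r s t v \<le> 1"
proof (induction t)
  case 0
  then show ?case by simp
next
  case (Suc t)
  show ?case
  proof
    fix v assume "v \<in> V"
    have "0 \<le> (\<Sum>w\<in>V. wmat Phi r s v w * (1 - omega_seq V Phi \<alpha> r s t w))"
      using Suc.IH rs_pos \<open>v \<in> V\<close> by (intro sum_nonneg) (simp add: wmat_nonneg less_imp_le)
    with alpha_nonneg \<open>v \<in> V\<close>
    have "1 \<le> 1 + \<alpha> t v + (\<Sum>w\<in>V. wmat Phi r s v w * (1 - omega_seq V Phi \<alpha> r s t w))"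
      by fastforce
    then show "0 < omega_seq V Phi \<alpha> r s (Suc t) v \<and> omega_seq V Phi \<alpha> r s (Suc t) v \<le> 1"
      by simp
  qed
qed

lemma omega_seq_pos: "v \<in> V \<Longrightarrow> 0 < omega_seq V Phi \<alpha> r s t v"
  and omega_seq_le_one: "v \<in> V \<Longrightarrow> omega_seq V Phi \<alpha> r s t v \<le> 1"
  using omega_seq_in_unit_interval by auto

lemma omega_seq_correction_nonneg:
  "u \<in> V \<Longrightarrow> w \<in> V \<Longrightarrow> 0 \<le> wmat Phi r s u w * (1 - omega_seq V Phi \<alpha> r s t w)"
  using rs_pos omega_seq_le_one by (simp add: wmat_nonneg less_imp_le)

lemma omega_seq_Suc_le:
  assumes "\<forall>v\<in>V. incseq (\<lambda>t. \<alpha> t v)"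
  shows "\<forall>v\<in>V. omega_seq V Phi \<alpha> r s (Suc t) v \<le> omega_seq V Phi \<alpha> r s t v"
proof (induction t)
  case 0
  then show ?case using omega_seq_le_one[of _ 1] by simp
next
  case (Suc t)
  show ?case
  proof
    fix v assume "v \<in> V"
    let ?S = "\<lambda>t. \<Sum>w\<in>V. wmat Phi r s v w * (1 - omega_seq V Phi \<alpha> r s t w)"
    have "?S t \<le> ?S (Suc t)"
      using Suc.IH rs_pos \<open>v \<in> V\<close>
      by (intro sum_mono mult_left_mono) (auto simp: wmat_nonneg less_imp_le)
    moreover have "\<alpha> t v \<le> \<alpha> (Suc t) v"
      using assms \<open>v \<in> V\<close> by (simp add: incseq_Suc_iff)
    moreover have "0 \<le> \<alpha> t v" "0 \<le> ?S t"
      using alpha_nonneg omega_seq_correction_nonneg \<open>v \<in> V\<close> by (auto intro: sum_nonneg)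
    ultimately have "1 / (1 + \<alpha> (Suc t) v + ?S (Suc t)) \<le> 1 / (1 + \<alpha> t v + ?S t)"
      by (intro frac_le) auto
    then show "omega_seq V Phi \<alpha> r s (Suc (Suc t)) v \<le> omega_seq V Phi \<alpha> r s (Suc t) v"
      by simp
  qed
qed

lemma decseq_omega_seq:
  assumes "\<forall>v\<in>V. incseq (\<lambda>t. \<alpha> t v)" "v \<in> V"
  shows "decseq (\<lambda>t. omega_seq V Phi \<alpha> r s t v)"
  using omega_seq_Suc_le[OF assms(1)] assms(2) by (intro decseq_SucI) blast

lemma convergent_omega_seq:
  assumes "\<forall>v\<in>V. incseq (\<lambda>t. \<alpha> t v)" "v \<in> V"
  shows "convergent (\<lambda>t. omega_seq V Phi \<alpha> r s t v)"
  using decseq_convergent[OF decseq_omega_seq[OF assms], of 0] omega_seq_pos[OF assms(2)]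
  by (metis convergent_def less_imp_le)

lemma lim_omega_seq_less_one_iff:
  assumes "\<forall>v\<in>V. incseq (\<lambda>t. \<alpha> t v)" "v \<in> V"
  shows "lim (\<lambda>t. omega_seq V Phi \<alpha> r s t v) < 1 \<longleftrightarrow> (\<exists>t. omega_seq V Phi \<alpha> r s t v < 1)"
proof -
  have "bdd_below (range (\<lambda>t. omega_seq V Phi \<alpha> r s t v))"
    using omega_seq_pos[OF assms(2)] by (intro bdd_belowI[where m = 0]) (auto intro: less_imp_le)
  from decseq_lim_less_first_iff[OF decseq_omega_seq[OF assms] this] show ?thesis
    by simp
qed

lemma omega_seq_less_one_if_reaches_alpha:
  assumes "finite V" "Phi \<subseteq> V \<times> V" "(v, w) \<in> Phi\<^sup>*" "w \<in> V" "\<alpha> t0 w \<noteq> 0"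
  shows "\<exists>t. omega_seq V Phi \<alpha> r s t v < 1"
  using assms(3,4)
proof (induction rule: converse_rtrancl_induct)
  case base
  have "0 < \<alpha> t0 w"
    using alpha_nonneg \<open>w \<in> V\<close> \<open>\<alpha> t0 w \<noteq> 0\<close> by (simp add: order_less_le)
  moreover have "0 \<le> (\<Sum>x\<in>V. wmat Phi r s w x * (1 - omega_seq V Phi \<alpha> r s t0 x))"
    using omega_seq_correction_nonneg \<open>w \<in> V\<close> by (simp add: sum_nonneg)
  ultimately have "omega_seq V Phi \<alpha> r s (Suc t0) w < 1"
    by simp
  then show ?case ..
next
  case (step u x)
  then obtain t where t: "omega_seq V Phi \<alpha> r s t x < 1" by blast
  have "u \<in> V" "x \<in> V" using step.hyps(1) assms(2) by auto
  let ?f = "\<lambda>y. wmat Phi r s u y * (1 - omega_seq V Phi \<alpha> r s t y)"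
  have "0 < ?f x"
    using t step.hyps(1) \<open>u \<in> V\<close> \<open>x \<in> V\<close> rs_pos by (simp add: wmat_pos)
  also have "?f x \<le> (\<Sum>y\<in>V. ?f y)"
    using \<open>finite V\<close> \<open>x \<in> V\<close> \<open>u \<in> V\<close> omega_seq_correction_nonneg by (intro member_le_sum) auto
  moreover have "0 \<le> \<alpha> t u"
    using alpha_nonneg \<open>u \<in> V\<close> by simp
  ultimately have "1 < 1 + \<alpha> t u + (\<Sum>y\<in>V. ?f y)"
    by linarith
  then have "omega_seq V Phi \<alpha> r s (Suc t) u < 1"
    by simp
  then show ?case ..
qed

lemma omega_seq_less_one_iff_reaches_alpha:
  assumes "finite V" "Phi \<subseteq> V \<times> V" "v \<in> V"
  shows "(\<exists>t. omega_seq V Phi \<alpha> r s t v < 1) \<longleftrightarrow> (\<exists>w. (v, w) \<in> Phi\<^sup>* \<and> (\<exists>t. \<alpha> t w \<noteq> 0))"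
proof
  assume "\<exists>t. omega_seq V Phi \<alpha> r s t v < 1"
  then show "\<exists>w. (v, w) \<in> Phi\<^sup>* \<and> (\<exists>t. \<alpha> t w \<noteq> 0)"
    using omega_seq_eq_one_if_alpha_vanishes[of v Phi \<alpha> V r s] by force
next
  assume "\<exists>w. (v, w) \<in> Phi\<^sup>* \<and> (\<exists>t. \<alpha> t w \<noteq> 0)"
  then show "\<exists>t. omega_seq V Phi \<alpha> r s t v < 1"
    using omega_seq_less_one_if_reaches_alpha[OF assms(1,2)] rtrancl_closed_in[OF assms(2) _ assms(3)]
    by blast
qed

end

lemma convergent_eta_seq:
  assumes "wf (Phi\<inverse>)"
    and "\<forall>v\<in>V. convergent (\<lambda>t. \<beta> t v)"
    and "\<forall>v\<in>V. convergent (\<lambda>t. omega_seq V Phi \<alpha> r s t v)"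
    and "v \<in> V"
  shows "convergent (\<lambda>t. eta_seq V Phi \<alpha> \<beta> r s t v)"
  using assms(1,4)
proof (induction v rule: wf_induct_rule)
  case (less v)
  have "convergent (\<lambda>t. adj Phi v w * omega_seq V Phi \<alpha> r s t w * eta_seq V Phi \<alpha> \<beta> r s t w)"
    if "w \<in> V" for w
  proof (cases "(v, w) \<in> Phi")
    case True
    then show ?thesis
      using less.IH \<open>w \<in> V\<close> assms(3)
      by (intro convergent_mult convergent_const) auto
  qed (simp add: adj_def convergent_const)
  with assms(2) \<open>v \<in> V\<close> have "convergent (\<lambda>t. eta_seq V Phi \<alpha> \<beta> r s (Suc t) v)"
    by (simp add: convergent_add convergent_sum convergent_const)
  then show ?case
    using convergent_Suc_iff[of "\<lambda>t. eta_seq V Phi \<alpha> \<beta> r s t v"] by simp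
qed

theorem lemma3:
  fixes V :: "'a set" and Phi :: "('a \<times> 'a) set"
    and \<alpha> \<beta> :: "nat \<Rightarrow> 'a \<Rightarrow> real" and r s :: "'a \<Rightarrow> real"
  assumes "finite V" and "Phi \<subseteq> V \<times> V"
    and "\<forall>t. \<forall>v\<in>V. \<alpha> t v \<ge> 0" and "\<forall>t. \<forall>v\<in>V. \<beta> t v \<ge> 0"
    and "\<forall>v\<in>V. incseq (\<lambda>t. \<alpha> t v)"
    and "\<forall>v\<in>V. convergent (\<lambda>t. \<beta> t v)"
    and "\<forall>v\<in>V. r v > 0 \<and> s v > 0 \<and> r v = 1 / s v"
    and "acyclic Phi"
  shows "(\<forall>v\<in>V. convergent (\<lambda>t. eta_seq V Phi \<alpha> \<beta> r s t v))
       \<and> (\<forall>v\<in>V. decseq (\<lambda>t. omega_seq V Phi \<alpha> r s t v)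
                 \<and> convergent (\<lambda>t. omega_seq V Phi \<alpha> r s t v))
       \<and> (\<forall>v\<in>V. lim (\<lambda>t. omega_seq V Phi \<alpha> r s t v) < 1 \<longleftrightarrow>
                 (\<exists>w. (v, w) \<in> Phi\<^sup>* \<and> (\<exists>t. \<alpha> t w \<noteq> 0)))"
proof -
  have rs: "\<forall>v\<in>V. 0 < r v \<and> 0 < s v" using assms(7) by auto
  have "wf (Phi\<inverse>)"
    using assms(1,2,8) by (meson finite_SigmaI finite_acyclic_wf_converse finite_subset)
  then show ?thesis
    using convergent_eta_seq[OF _ assms(6)] convergent_omega_seq[OF assms(3) rs assms(5)]
      decseq_omega_seq[OF assms(3) rs assms(5)] lim_omega_seq_less_one_iff[OF assms(3) rs assms(5)]
      omega_seq_less_one_iff_reaches_alpha[OF assms(3) rs assms(1,2)]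
    by (simp add: Ball_def)
qed

end
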